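(* Any efficient strategy is regret-free.
   Context: Let $\mathcal{X}$ be a finite set of alternatives. A proto-ranking is an irreflexive and transitive binary relation on $\mathcal{X}$; a ranking is a total proto-ranking; a tournament is a total and asymmetric binary relation on $\mathcal{X}$. The chair has a fixed preference $\succ$, a ranking on $\mathcal{X}$. Interaction: given a tournament $\mathrel{W}$, start from $R_0=\varnothing$; in each period with $R_{t-1}$ not total the chair offers a pair $\{x,y\}$ unranked by $R_{t-1}$, the winner is $x$ if $x\mathrel{W}y$ and $y$ otherwise, and $R_t$ is the transitive closure of $R_{t-1}\cup\{(\text{winner},\text{loser})\}$; stop when $R_t$ is total. A strategy assigns to each non-terminal history (sequence of (winner, loser) pairs) a pair unranked at it; its outcome under $\mathrel{W}$ is the final ranking. A ranking is $\mathrel{W}$-feasible if it is the outcome under $\mathrel{W}$ of some strategy. $R$ is more aligned with $\succ$ than $R'$ if for all $x\succ y$, $xR'y$ implies $xRy$. A ranking is $\mathrel{W}$-unimprovable if no other $\mathrel{W}$-feasible ranking is more aligned with $\succ$. A strategy is regret-free if for every tournament $\mathrel{W}$ its outcome under $\mathrel{W}$ is $\mathrel{W}$-unimprovable. A ranking $R$ is $\mathrel{W}$-efficient if $x\succ y$ and $x\mathrel{W}y$ imply $xRy$; a strategy is efficient if for every tournament $\mathrel{W}$ its outcome under $\mathrel{W}$ is $\mathrel{W}$-efficient. *)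

theory Defs
  imports Main
begin

definition proto_ranking :: "('a \<times> 'a) set \<Rightarrow> bool" where
  "proto_ranking R \<longleftrightarrow> (\<forall>x. (x,x) \<notin> R) \<and> trans R"

definition total_rel :: "('a \<times> 'a) set \<Rightarrow> bool" where
  "total_rel R \<longleftrightarrow> (\<forall>x y. x \<noteq> y \<longrightarrow> (x,y) \<in> R \<or> (y,x) \<in> R)"

definition ranking :: "('a \<times> 'a) set \<Rightarrow> bool" where
  "ranking R \<longleftrightarrow> proto_ranking R \<and> total_rel R"

definition tournament :: "('a \<times> 'a) set \<Rightarrow> bool" where
  "tournament W \<longleftrightarrow> total_rel W \<and> (\<forall>x y. (x,y) \<in> W \<longrightarrow> (y,x) \<notin> W)"

text \<open>A history is the list of (winner, loser) pairs so far; its relation is built as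
  R_0 = {} and R_t = transitive closure of (R_{t-1} \<union> {(winner,loser)}).\<close>

definition hist_rel :: "('a \<times> 'a) list \<Rightarrow> ('a \<times> 'a) set" where
  "hist_rel h = foldl (\<lambda>R p. trancl (R \<union> {p})) {} h"

definition unranked :: "('a \<times> 'a) set \<Rightarrow> ('a \<times> 'a) \<Rightarrow> bool" where
  "unranked R p \<longleftrightarrow> fst p \<noteq> snd p \<and> p \<notin> R \<and> (snd p, fst p) \<notin> R"

inductive legal_hist :: "('a \<times> 'a) list \<Rightarrow> bool" where
  nil: "legal_hist []"
| snoc: "legal_hist h \<Longrightarrow> \<not> total_rel (hist_rel h) \<Longrightarrow> unranked (hist_rel h) p
           \<Longrightarrow> legal_hist (h @ [p])"

text \<open>A strategy maps each history to an (ordered representation of an) offered pair;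
  it must offer an unranked pair at every non-terminal history.\<close>
definition strategy :: "(('a \<times> 'a) list \<Rightarrow> 'a \<times> 'a) \<Rightarrow> bool" where
  "strategy \<sigma> \<longleftrightarrow> (\<forall>h. legal_hist h \<and> \<not> total_rel (hist_rel h) \<longrightarrow> unranked (hist_rel h) (\<sigma> h))"

definition match_result :: "('a \<times> 'a) set \<Rightarrow> 'a \<times> 'a \<Rightarrow> 'a \<times> 'a" where
  "match_result W p = (if p \<in> W then p else (snd p, fst p))"

fun play :: "(('a \<times> 'a) list \<Rightarrow> 'a \<times> 'a) \<Rightarrow> ('a \<times> 'a) set \<Rightarrow> nat \<Rightarrow> ('a \<times> 'a) list" where
  "play \<sigma> W 0 = []"
| "play \<sigma> W (Suc n) = (if total_rel (hist_rel (play \<sigma> W n)) then play \<sigma> W n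
                        else play \<sigma> W n @ [match_result W (\<sigma> (play \<sigma> W n))])"

definition outcome :: "(('a \<times> 'a) list \<Rightarrow> 'a \<times> 'a) \<Rightarrow> ('a \<times> 'a) set \<Rightarrow> ('a \<times> 'a) set" where
  "outcome \<sigma> W = hist_rel (play \<sigma> W (LEAST n. total_rel (hist_rel (play \<sigma> W n))))"

definition feasible :: "('a \<times> 'a) set \<Rightarrow> ('a \<times> 'a) set \<Rightarrow> bool" where
  "feasible W R \<longleftrightarrow> ranking R \<and> (\<exists>\<sigma>. strategy \<sigma> \<and> outcome \<sigma> W = R)"

definition more_aligned :: "('a \<times> 'a) set \<Rightarrow> ('a \<times> 'a) set \<Rightarrow> ('a \<times> 'a) set \<Rightarrow> bool" where
  "more_aligned P R R' \<longleftrightarrow> (\<forall>x y. (x,y) \<in> P \<longrightarrow> (x,y) \<in> R' \<longrightarrow> (x,y) \<in> R)"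

definition unimprovable :: "('a \<times> 'a) set \<Rightarrow> ('a \<times> 'a) set \<Rightarrow> ('a \<times> 'a) set \<Rightarrow> bool" where
  "unimprovable P W R \<longleftrightarrow> ranking R \<and>
     \<not> (\<exists>R'. feasible W R' \<and> R' \<noteq> R \<and> more_aligned P R' R)"

definition regret_free :: "('a \<times> 'a) set \<Rightarrow> (('a \<times> 'a) list \<Rightarrow> 'a \<times> 'a) \<Rightarrow> bool" where
  "regret_free P \<sigma> \<longleftrightarrow> strategy \<sigma> \<and> (\<forall>W. tournament W \<longrightarrow> unimprovable P W (outcome \<sigma> W))"

definition efficient_ranking :: "('a \<times> 'a) set \<Rightarrow> ('a \<times> 'a) set \<Rightarrow> ('a \<times> 'a) set \<Rightarrow> bool" where
  "efficient_ranking P W R \<longleftrightarrow> (\<forall>x y. (x,y) \<in> P \<longrightarrow> (x,y) \<in> W \<longrightarrow> (x,y) \<in> R)"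

definition efficient :: "('a \<times> 'a) set \<Rightarrow> (('a \<times> 'a) list \<Rightarrow> 'a \<times> 'a) \<Rightarrow> bool" where
  "efficient P \<sigma> \<longleftrightarrow> strategy \<sigma> \<and> (\<forall>W. tournament W \<longrightarrow> efficient_ranking P W (outcome \<sigma> W))"

end

theory Submission
  imports Defs
begin

text \<open>Every outcome under a tournament W is the transitive closure of the matches played, all of
  which are edges of W. An efficient outcome R already contains every such edge that a more
  aligned ranking R' contains: if x W y and x R' y, then either x \<succ> y and efficiency puts
  (x,y) into R, or y \<succ> x, and then y R x is impossible because alignment would carry it
  into R'. Hence R' \<subseteq> R, and two rankings one of which contains the other coincide.\<close>

lemma rankings_eq_if_subset:
  assumes "total_rel R'" and "proto_ranking R" and "R' \<subseteq> R"
  shows "R' = R"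
proof
  show "R \<subseteq> R'"
  proof clarify
    fix x y assume "(x, y) \<in> R"
    with assms(2) have "x \<noteq> y" and "(y, x) \<notin> R"
      unfolding proto_ranking_def trans_def by blast+
    with assms(1,3) show "(x, y) \<in> R'" unfolding total_rel_def by blast
  qed
qed (fact assms(3))

lemma efficient_ranking_contains_aligned_edge:
  assumes "total_rel P" and "ranking R" and "efficient_ranking P W R"
    and "proto_ranking R'" and "more_aligned P R' R"
    and "(x, y) \<in> W" and "(x, y) \<in> R'"
  shows "(x, y) \<in> R"
proof -
  have "x \<noteq> y" and yx_R': "(y, x) \<notin> R'"
    using assms(4,7) unfolding proto_ranking_def trans_def by blast+
  then consider "(x, y) \<in> P" | "(y, x) \<in> P" using assms(1) unfolding total_rel_def by blast
  then show ?thesis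
  proof cases
    case 1
    with assms(3,6) show ?thesis unfolding efficient_ranking_def by blast
  next
    case 2
    with assms(5) yx_R' have "(y, x) \<notin> R" unfolding more_aligned_def by blast
    with assms(2) \<open>x \<noteq> y\<close> show ?thesis unfolding ranking_def total_rel_def by blast
  qed
qed

lemma efficient_ranking_unimprovable:
  assumes "ranking P" and "ranking R" and "efficient_ranking P W R"
    and "ranking R'" and "S \<subseteq> W" and "R' = S\<^sup>+" and "more_aligned P R' R"
  shows "R' = R"
proof (rule rankings_eq_if_subset)
  have "S \<subseteq> R"
    using efficient_ranking_contains_aligned_edge[of P R W R'] assms
    unfolding ranking_def by (auto intro: r_into_trancl)
  then have "S\<^sup>+ \<subseteq> R" using assms(2) trancl_mono_subset[of S R]
    by (simp add: ranking_def proto_ranking_def)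
  with assms(6) show "R' \<subseteq> R" by simp
qed (use assms(2,4) in \<open>simp_all add: ranking_def\<close>)

lemma hist_rel_eq_trancl_set: "hist_rel h = (set h)\<^sup>+"
proof (induction h rule: rev_induct)
  case (snoc p h)
  then show ?case
    using trancl_trancl_Un[of "set h" "{p}"] by (simp add: hist_rel_def Un_commute)
qed (simp add: hist_rel_def)

lemma legal_hist_acyclic: "legal_hist h \<Longrightarrow> acyclic (set h)"
proof (induction h rule: legal_hist.induct)
  case (snoc h p)
  obtain a b where p: "p = (a, b)" by fastforce
  with snoc.hyps(3) have "(b, a) \<notin> (set h)\<^sup>*"
    unfolding unranked_def hist_rel_eq_trancl_set by (auto simp: rtrancl_eq_or_trancl)
  with snoc.IH p show ?case by simp
qed (simp add: acyclic_def)

lemma unranked_match_result: "unranked R p \<Longrightarrow> unranked R (match_result W p)"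
  unfolding unranked_def match_result_def by auto

lemma match_result_in_tournament:
  "tournament W \<Longrightarrow> unranked R p \<Longrightarrow> match_result W p \<in> W"
  unfolding tournament_def total_rel_def match_result_def unranked_def by (cases p) auto

lemma legal_hist_play: "strategy \<sigma> \<Longrightarrow> legal_hist (play \<sigma> W n)"
  by (induction n) (auto intro!: legal_hist.intros unranked_match_result simp: strategy_def)

lemma play_offer_unranked:
  assumes "strategy \<sigma>" and "\<not> total_rel (hist_rel (play \<sigma> W n))"
  shows "unranked (hist_rel (play \<sigma> W n)) (\<sigma> (play \<sigma> W n))"
  using assms legal_hist_play[OF assms(1)] by (simp add: strategy_def)

lemma set_play_subset_tournament:
  assumes "strategy \<sigma>" and "tournament W"
  shows "set (play \<sigma> W n) \<subseteq> W"
proof (induction n)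
  case (Suc n)
  then show ?case
    using match_result_in_tournament[OF assms(2) play_offer_unranked[OF assms(1)]] by auto
qed simp

lemma card_hist_rel_play_ge:
  fixes \<sigma> :: "('a::finite \<times> 'a) list \<Rightarrow> 'a \<times> 'a"
  assumes "strategy \<sigma>" and "\<forall>m<n. \<not> total_rel (hist_rel (play \<sigma> W m))"
  shows "n \<le> card (hist_rel (play \<sigma> W n))"
  using assms(2)
proof (induction n)
  case (Suc n)
  let ?h = "play \<sigma> W n" and ?q = "match_result W (\<sigma> (play \<sigma> W n))"
  have not_total: "\<not> total_rel (hist_rel ?h)" using Suc.prems by simp
  then have "?q \<notin> hist_rel ?h"
    using unranked_match_result[OF play_offer_unranked[OF assms(1)]] unfolding unranked_def by blast
  moreover have "?q \<in> hist_rel (?h @ [?q])" and "hist_rel ?h \<subseteq> hist_rel (?h @ [?q])"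
    by (simp_all add: hist_rel_eq_trancl_set r_into_trancl' trancl_mono_subset subset_insertI)
  ultimately have "hist_rel ?h \<subset> hist_rel (?h @ [?q])" by blast
  then have "card (hist_rel ?h) < card (hist_rel (play \<sigma> W (Suc n)))"
    using not_total by (simp add: psubset_card_mono)
  with Suc show ?case by simp
qed simp

lemma play_eventually_total:
  fixes \<sigma> :: "('a::finite \<times> 'a) list \<Rightarrow> 'a \<times> 'a"
  assumes "strategy \<sigma>"
  shows "\<exists>n. total_rel (hist_rel (play \<sigma> W n))"
proof (rule ccontr)
  define N where "N = Suc (card (UNIV :: ('a \<times> 'a) set))"
  assume "\<nexists>n. total_rel (hist_rel (play \<sigma> W n))"
  then have "N \<le> card (hist_rel (play \<sigma> W N))"
    using card_hist_rel_play_ge[OF assms] by blast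
  moreover have "card (hist_rel (play \<sigma> W N)) < N"
    unfolding N_def by (simp add: card_mono less_Suc_eq_le)
  ultimately show False by simp
qed

lemma outcome_eq_trancl_play:
  "outcome \<sigma> W = (set (play \<sigma> W (LEAST n. total_rel (hist_rel (play \<sigma> W n)))))\<^sup>+"
  by (simp add: outcome_def hist_rel_eq_trancl_set)

lemma outcome_ranking:
  fixes \<sigma> :: "('a::finite \<times> 'a) list \<Rightarrow> 'a \<times> 'a"
  assumes "strategy \<sigma>"
  shows "ranking (outcome \<sigma> W)"
proof -
  have "total_rel (outcome \<sigma> W)"
    unfolding outcome_def using play_eventually_total[OF assms] by (rule LeastI_ex)
  moreover have "proto_ranking (outcome \<sigma> W)"
    using legal_hist_acyclic[OF legal_hist_play[OF assms]]
    unfolding outcome_eq_trancl_play proto_ranking_def acyclic_def by simp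
  ultimately show ?thesis by (simp add: ranking_def)
qed

lemma outcome_eq_trancl_subset_tournament:
  assumes "strategy \<sigma>" and "tournament W"
  obtains S where "S \<subseteq> W" and "outcome \<sigma> W = S\<^sup>+"
  by (rule that[OF set_play_subset_tournament[OF assms] outcome_eq_trancl_play])

theorem corollary1:
  fixes P :: "('a::finite \<times> 'a) set" and \<sigma> :: "('a \<times> 'a) list \<Rightarrow> 'a \<times> 'a"
  assumes "ranking P"
    and "efficient P \<sigma>"
  shows "regret_free P \<sigma>"
proof -
  have \<sigma>: "strategy \<sigma>" using assms(2) by (simp add: efficient_def)
  have "unimprovable P W (outcome \<sigma> W)" if W: "tournament W" for W
    unfolding unimprovable_def
  proof (intro conjI notI)
    show R: "ranking (outcome \<sigma> W)" using \<sigma> by (rule outcome_ranking)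
    assume "\<exists>R'. feasible W R' \<and> R' \<noteq> outcome \<sigma> W \<and> more_aligned P R' (outcome \<sigma> W)"
    then obtain R' \<sigma>' where R': "ranking R'" "strategy \<sigma>'" "outcome \<sigma>' W = R'"
      and "R' \<noteq> outcome \<sigma> W" and aligned: "more_aligned P R' (outcome \<sigma> W)"
      unfolding feasible_def by blast
    obtain S where S: "S \<subseteq> W" "R' = S\<^sup>+"
      using outcome_eq_trancl_subset_tournament[OF R'(2) W] R'(3) by metis
    have "efficient_ranking P W (outcome \<sigma> W)"
      using assms(2) W by (simp add: efficient_def)
    then have "R' = outcome \<sigma> W"
      by (rule efficient_ranking_unimprovable[OF assms(1) R _ R'(1) S aligned])
    with \<open>R' \<noteq> outcome \<sigma> W\<close> show False ..
  qed
  with \<sigma> show ?thesis by (simp add: regret_free_def)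
qed

end
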